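(* Let $N\ge3$, $\frac{N}{N-1}<p<2$, $\xi=(p-1)(N-1)$, $\beta=\frac{p-1}{\xi-1}$, $\sigma=\frac{2-p}{p-1}$, let $0<R\le\infty$ and $\kappa\in\{p,-p\}$. Suppose $\varphi\in X_1(B_R)$ satisfies \[ L_0^{\kappa}(\varphi):=-\Delta\varphi+\frac{\kappa\, x\cdot\nabla\varphi}{\beta|x|^2}=0\quad\text{in } B_R\setminus\{0\}, \] and, in case $R<\infty$, $\varphi=0$ on $\partial B_R$. Then $\varphi=0$.
   Context: $B_R=\{x\in\mathbb{R}^N:|x|<R\}$ ($B_\infty=\mathbb{R}^N$). $X(B_R)$ is the set of functions $\varphi$ on $B_R\setminus\{0\}$ with $\sup_{0<|x|<R}\{|x|^{\sigma}|\varphi(x)|+|x|^{\sigma+1}|\nabla\varphi(x)|\}<\infty$ (and vanishing on $\partial B_R$ when $R<\infty$); $X_1(B_R)$ is the subspace of $\varphi\in X(B_R)$ with zero spherical averages, i.e. $\int_{S^{N-1}}\varphi(r\theta)\,d\theta=0$ for all $0<r<R$ (equivalently, $\varphi$ has no $k=0$ spherical harmonic mode). *)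

theory Defs
  imports "HOL-Analysis.Analysis" "HOL-Library.Extended_Real"
begin

definition punct_ball :: "ereal \<Rightarrow> 'a::euclidean_space set" where
  "punct_ball R = {x. 0 < norm x \<and> ereal (norm x) < R}"

definition pderiv_dir :: "('a::euclidean_space \<Rightarrow> real) \<Rightarrow> 'a \<Rightarrow> 'a \<Rightarrow> real" where
  "pderiv_dir f b x = frechet_derivative f (at x) b"

definition grad :: "('a::euclidean_space \<Rightarrow> real) \<Rightarrow> 'a \<Rightarrow> 'a" where
  "grad f x = (\<Sum>b\<in>Basis. pderiv_dir f b x *\<^sub>R b)"

definition laplacian :: "('a::euclidean_space \<Rightarrow> real) \<Rightarrow> 'a \<Rightarrow> real" where
  "laplacian f x = (\<Sum>b\<in>Basis. pderiv_dir (pderiv_dir f b) b x)"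

definition C2_on :: "'a::euclidean_space set \<Rightarrow> ('a \<Rightarrow> real) \<Rightarrow> bool" where
  "C2_on D f \<longleftrightarrow>
     (\<forall>x\<in>D. f differentiable (at x) \<and> (\<forall>b\<in>Basis. pderiv_dir f b differentiable (at x))) \<and>
     (\<forall>b\<in>Basis. \<forall>c\<in>Basis. continuous_on D (pderiv_dir (pderiv_dir f b) c))"

definition X_space :: "real \<Rightarrow> ereal \<Rightarrow> ('a::euclidean_space \<Rightarrow> real) \<Rightarrow> bool" where
  "X_space \<sigma> R \<phi> \<longleftrightarrow>
     (\<exists>C. \<forall>x\<in>punct_ball R.
        norm x powr \<sigma> * \<bar>\<phi> x\<bar> + norm x powr (\<sigma> + 1) * norm (grad \<phi> x) \<le> C) \<and>
     (R \<noteq> \<infinity> \<longrightarrow> (\<forall>y. ereal (norm y) = R \<longrightarrow> (\<phi> \<longlongrightarrow> 0) (at y within punct_ball R)))"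

text \<open>Zero spherical averages. The surface integral over S^{N-1} is expressed through the
  cone measure: integral over S^{N-1} of g = N * (Lebesgue integral over B_1 of g(x/|x|)).\<close>
definition zero_sph_avg :: "ereal \<Rightarrow> ('a::euclidean_space \<Rightarrow> real) \<Rightarrow> bool" where
  "zero_sph_avg R \<phi> \<longleftrightarrow>
     (\<forall>r. 0 < r \<and> ereal r < R \<longrightarrow>
        integral (ball 0 1) (\<lambda>x. \<phi> (r *\<^sub>R (x /\<^sub>R norm x))) = 0)"

definition X1_space :: "real \<Rightarrow> ereal \<Rightarrow> ('a::euclidean_space \<Rightarrow> real) \<Rightarrow> bool" where
  "X1_space \<sigma> R \<phi> \<longleftrightarrow> X_space \<sigma> R \<phi> \<and> zero_sph_avg R \<phi>"

end

theory Submission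
  imports Defs "HOL-Real_Asymp.Real_Asymp"
begin

text \<open>
  Fix a unit vector \<open>e\<close> and let \<open>x\<^sup>*\<close> be the reflection of \<open>x\<close> in the hyperplane
  \<open>x \<bullet> e = 0\<close>. The operator \<open>\<Delta> - \<gamma> (x \<bullet> \<nabla>) / |x|\<^sup>2\<close>, with \<open>\<gamma> = \<kappa> / \<beta>\<close>, commutes
  with this reflection, so \<open>\<psi>(x) = \<phi>(x) - \<phi>(x\<^sup>*)\<close> solves the equation in the half space
  \<open>x \<bullet> e > 0\<close> and vanishes on its boundary. The barrier \<open>w(x) = |x|\<^sup>a (x \<bullet> e)\<close> satisfies
  \<open>\<Delta>w - \<gamma> (x \<bullet> \<nabla>w) / |x|\<^sup>2 = (a (a + N) - \<gamma> (a + 1)) |x|\<^bsup>a - 2\<^esup> (x \<bullet> e)\<close>, and in the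
  range \<open>N/(N-1) < p < 2\<close> there is an exponent \<open>a < -(\<sigma> + 1)\<close> making this negative.
  Hence \<open>\<psi> - \<epsilon> (w + 1)\<close> has no positive interior maximum on a half annulus
  \<open>\<delta> \<le> |x| \<le> \<rho>\<close>, \<open>x \<bullet> e \<ge> 0\<close>. The weighted bounds give \<open>|\<psi>(x)| = O((x \<bullet> e) |x|\<^bsup>-\<sigma> - 1\<^esup>)\<close>,
  which is below \<open>\<epsilon> w\<close> on a small sphere because \<open>a + \<sigma> + 1 < 0\<close>; decay at infinity, or
  the boundary condition, makes \<open>\<psi> \<le> \<epsilon>\<close> on a large sphere. Letting \<open>\<epsilon> \<rightarrow> 0\<close> gives
  \<open>\<psi> \<le> 0\<close>, and exchanging the roles of \<open>x\<close> and \<open>x\<^sup>*\<close> gives \<open>\<psi> = 0\<close>. Invariance under all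
  reflections makes \<open>\<phi>\<close> radial, and a radial function with zero spherical averages vanishes.
\<close>

section \<open>Directional derivatives and the Hessian form\<close>

lemma frechet_derivative_eq_sum_Basis:
  fixes f :: "'a::euclidean_space \<Rightarrow> real"
  assumes "f differentiable (at y)"
  shows "frechet_derivative f (at y) v = (\<Sum>c\<in>Basis. (v \<bullet> c) * pderiv_dir f c y)"
proof -
  have "linear (frechet_derivative f (at y))"
    using assms frechet_derivative_works has_derivative_linear by blast
  then have "frechet_derivative f (at y) (\<Sum>c\<in>Basis. (v \<bullet> c) *\<^sub>R c)
      = (\<Sum>c\<in>Basis. (v \<bullet> c) * pderiv_dir f c y)"
    by (simp add: linear_sum linear_scale o_def pderiv_dir_def)
  then show ?thesis
    by (simp add: euclidean_representation)
qed

lemma inner_grad: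
  fixes f :: "'a::euclidean_space \<Rightarrow> real"
  assumes "f differentiable (at y)"
  shows "v \<bullet> grad f y = frechet_derivative f (at y) v"
  using frechet_derivative_eq_sum_Basis[OF assms, of v]
  by (simp add: grad_def inner_sum_right mult.commute)

lemma abs_frechet_derivative_le_norm_grad:
  fixes f :: "'a::euclidean_space \<Rightarrow> real"
  assumes "f differentiable (at y)" "norm v = 1"
  shows "\<bar>frechet_derivative f (at y) v\<bar> \<le> norm (grad f y)"
  using inner_grad[OF assms(1), of v] Cauchy_Schwarz_ineq2[of v "grad f y"] assms(2) by simp

lemma has_real_derivative_along_line:
  fixes f :: "'a::euclidean_space \<Rightarrow> real"
  assumes "f differentiable (at (y + t *\<^sub>R v))"
  shows "((\<lambda>s. f (y + s *\<^sub>R v)) has_real_derivative frechet_derivative f (at (y + t *\<^sub>R v)) v) (at t)"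
proof -
  let ?f' = "frechet_derivative f (at (y + t *\<^sub>R v))"
  have f': "(f has_derivative ?f') (at (y + t *\<^sub>R v))"
    using assms frechet_derivative_works by blast
  have line: "((\<lambda>s. y + s *\<^sub>R v) has_derivative (\<lambda>h. h *\<^sub>R v)) (at t)"
    by (auto intro!: derivative_eq_intros)
  have "(\<lambda>h. ?f' (h *\<^sub>R v)) = (*) (?f' v)"
    using has_derivative_linear[OF f'] by (auto simp: linear_scale fun_eq_iff)
  then show ?thesis
    using has_derivative_compose[OF line f'] by (simp add: has_field_derivative_def o_def)
qed

definition hessian_form :: "('a::euclidean_space \<Rightarrow> real) \<Rightarrow> 'a \<Rightarrow> 'a \<Rightarrow> real" where
  "hessian_form f x v =
     (\<Sum>c\<in>Basis. \<Sum>d\<in>Basis. (v \<bullet> c) * (v \<bullet> d) * pderiv_dir (pderiv_dir f c) d x)"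

lemma hessian_form_along_line:
  fixes f :: "'a::euclidean_space \<Rightarrow> real"
  assumes "open U" "y \<in> U"
    and diff: "\<And>x. x \<in> U \<Longrightarrow> f differentiable (at x)"
    and diff2: "\<And>c. c \<in> Basis \<Longrightarrow> pderiv_dir f c differentiable (at y)"
  shows "((\<lambda>t. frechet_derivative f (at (y + t *\<^sub>R v)) v) has_real_derivative hessian_form f y v) (at 0)"
proof -
  define T where "T = (\<lambda>t. y + t *\<^sub>R v) -` U"
  have "open T"
    unfolding T_def by (rule continuous_open_vimage[OF \<open>open U\<close>]) (intro continuous_intros)
  have "0 \<in> T"
    using \<open>y \<in> U\<close> by (simp add: T_def)
  have "((\<lambda>t. \<Sum>c\<in>Basis. (v \<bullet> c) * pderiv_dir f c (y + t *\<^sub>R v)) has_real_derivative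
      (\<Sum>c\<in>Basis. (v \<bullet> c) * frechet_derivative (pderiv_dir f c) (at (y + 0 *\<^sub>R v)) v)) (at 0)"
    using diff2 by (intro DERIV_sum DERIV_cmult has_real_derivative_along_line) simp
  also have "(\<Sum>c\<in>Basis. (v \<bullet> c) * frechet_derivative (pderiv_dir f c) (at (y + 0 *\<^sub>R v)) v)
      = hessian_form f y v"
    using frechet_derivative_eq_sum_Basis[OF diff2]
    by (simp add: hessian_form_def pderiv_dir_def sum_distrib_left mult.assoc)
  finally show ?thesis
  proof (rule has_field_derivative_transform_within_open[OF _ \<open>open T\<close> \<open>0 \<in> T\<close>])
    fix t assume "t \<in> T"
    then show "(\<Sum>c\<in>Basis. (v \<bullet> c) * pderiv_dir f c (y + t *\<^sub>R v))
        = frechet_derivative f (at (y + t *\<^sub>R v)) v"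
      using frechet_derivative_eq_sum_Basis[OF diff, of "y + t *\<^sub>R v" v] by (simp add: T_def)
  qed
qed

lemma hessian_form_Basis:
  assumes "b \<in> Basis"
  shows "hessian_form f x b = pderiv_dir (pderiv_dir f b) b x"
proof -
  have "(b \<bullet> c) * (b \<bullet> d) * pderiv_dir (pderiv_dir f c) d x
      = (if d = b then if c = b then pderiv_dir (pderiv_dir f b) b x else 0 else 0)"
    if "c \<in> Basis" "d \<in> Basis" for c d
    using that assms by (auto simp: inner_Basis inner_commute)
  then show ?thesis
    using assms by (simp add: hessian_form_def)
qed

lemma laplacian_eq_sum_hessian_form: "laplacian f x = (\<Sum>b\<in>Basis. hessian_form f x b)"
  by (simp add: laplacian_def hessian_form_Basis)

lemma local_max_second_derivative_nonpos:
  fixes g g' :: "real \<Rightarrow> real"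
  assumes "0 < d"
    and g': "\<And>t. \<bar>t\<bar> < d \<Longrightarrow> (g has_real_derivative g' t) (at t)"
    and g'': "(g' has_real_derivative g'') (at 0)"
    and max: "\<And>t. \<bar>t\<bar> < d \<Longrightarrow> g t \<le> g 0"
  shows "g'' \<le> 0"
proof (rule ccontr)
  assume "\<not> g'' \<le> 0"
  have "g' 0 = 0"
    by (rule DERIV_local_max[OF g'[of 0] \<open>0 < d\<close>]) (use \<open>0 < d\<close> max in auto)
  obtain d' where "0 < d'" and g'_pos: "\<And>h. 0 < h \<Longrightarrow> h < d' \<Longrightarrow> g' 0 < g' (0 + h)"
    using DERIV_pos_inc_right[OF g''] \<open>\<not> g'' \<le> 0\<close> by auto
  define h where "h = min d d' / 2"
  have h: "0 < h" "h < d" "h < d'"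
    using \<open>0 < d\<close> \<open>0 < d'\<close> by (auto simp: h_def)
  obtain c where c: "0 < c" "c < h" "g h - g 0 = (h - 0) * g' c"
    using MVT2[of 0 h g g'] h g' by force
  have "0 < g' c"
    using g'_pos[of c] c h \<open>g' 0 = 0\<close> by auto
  then have "g 0 < g h"
    using c h by (simp add: algebra_simps)
  with max[of h] h show False
    by auto
qed

lemma local_max_along_line:
  fixes g :: "'a::real_normed_vector \<Rightarrow> real"
  assumes "0 < \<eta>" and max: "\<And>y. norm (y - z) < \<eta> \<Longrightarrow> g y \<le> g z"
    and G': "\<And>t. \<bar>t\<bar> * norm v < \<eta> \<Longrightarrow> ((\<lambda>s. g (z + s *\<^sub>R v)) has_real_derivative G' t) (at t)"
    and G'': "(G' has_real_derivative G'') (at 0)"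
  shows "G' 0 = 0" "G'' \<le> 0"
proof -
  have "0 < norm v + 1"
    by (simp add: add_nonneg_pos)
  define d where "d = \<eta> / (norm v + 1)"
  have "0 < d"
    using \<open>0 < \<eta>\<close> \<open>0 < norm v + 1\<close> by (simp add: d_def)
  have small: "\<bar>t\<bar> * norm v < \<eta>" if "\<bar>t\<bar> < d" for t
  proof -
    have "\<bar>t\<bar> * norm v \<le> \<bar>t\<bar> * (norm v + 1)"
      by (simp add: mult_left_mono)
    also have "\<dots> < d * (norm v + 1)"
      using that \<open>0 < norm v + 1\<close> by (intro mult_strict_right_mono) auto
    also have "\<dots> = \<eta>"
      using \<open>0 < norm v + 1\<close> by (simp add: d_def)
    finally show ?thesis .
  qed
  have line_max: "g (z + t *\<^sub>R v) \<le> g (z + 0 *\<^sub>R v)" if "\<bar>t\<bar> < d" for t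
    using max[of "z + t *\<^sub>R v"] small[OF that] by simp
  show "G' 0 = 0"
    by (rule DERIV_local_max[OF G'[of 0] \<open>0 < d\<close>]) (use \<open>0 < \<eta>\<close> line_max in auto)
  show "G'' \<le> 0"
    using local_max_second_derivative_nonpos[OF \<open>0 < d\<close> G' G''] small line_max by blast
qed

section \<open>Reflections\<close>

definition reflection :: "'a::real_inner \<Rightarrow> 'a \<Rightarrow> 'a" where
  "reflection e x = x - (2 * (x \<bullet> e)) *\<^sub>R e"

lemma reflection_involution: "norm e = 1 \<Longrightarrow> reflection e (reflection e x) = x"
  by (simp add: reflection_def inner_diff_left algebra_simps norm_eq_1)

lemma inner_reflection_left: "reflection e x \<bullet> y = x \<bullet> reflection e y"
  by (simp add: reflection_def inner_diff_left inner_diff_right inner_commute)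

lemma inner_reflection_normal: "norm e = 1 \<Longrightarrow> reflection e x \<bullet> e = - (x \<bullet> e)"
  by (simp add: reflection_def inner_diff_left norm_eq_1)

lemma inner_reflection_reflection: "norm e = 1 \<Longrightarrow> reflection e x \<bullet> reflection e y = x \<bullet> y"
  by (simp add: inner_reflection_left reflection_involution)

lemma norm_reflection: "norm e = 1 \<Longrightarrow> norm (reflection e x) = norm x"
  by (simp add: norm_eq_sqrt_inner inner_reflection_reflection)

lemma reflection_add_scaleR: "reflection e (x + t *\<^sub>R v) = reflection e x + t *\<^sub>R reflection e v"
  by (simp add: reflection_def inner_add_left algebra_simps)

lemma reflection_eq_self: "x \<bullet> e = 0 \<Longrightarrow> reflection e x = x"
  by (simp add: reflection_def)

lemma reflection_uminus: "reflection (- e) = reflection e"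
  by (simp add: reflection_def fun_eq_iff)

lemma continuous_on_reflection: "continuous_on S (reflection e)"
  unfolding reflection_def by (intro continuous_intros)

lemma reflection_swaps_equal_norms:
  fixes x y :: "'a::real_inner"
  assumes "x \<noteq> y" "norm x = norm y"
  obtains e where "norm e = 1" "reflection e x = y"
proof
  define d where "d = norm (x - y)"
  have "0 < d"
    using assms by (simp add: d_def)
  define e where "e = (1 / d) *\<^sub>R (x - y)"
  show "norm e = 1"
    using \<open>0 < d\<close> by (simp add: e_def d_def)
  have "d\<^sup>2 = x \<bullet> x - 2 * (x \<bullet> y) + y \<bullet> y"
    by (simp add: d_def power2_norm_eq_inner inner_diff_left inner_diff_right inner_commute)
  moreover have "x \<bullet> x = y \<bullet> y"
    using assms(2) by (simp add: power2_norm_eq_inner[symmetric])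
  ultimately have "x \<bullet> (x - y) = d\<^sup>2 / 2"
    by (simp add: inner_diff_right)
  then have "x \<bullet> e = d / 2"
    using \<open>0 < d\<close> by (simp add: e_def power2_eq_square)
  then have "reflection e x = x - d *\<^sub>R e"
    by (simp add: reflection_def)
  then show "reflection e x = y"
    using \<open>0 < d\<close> by (simp add: e_def)
qed

lemma sum_hessian_form_reflection:
  assumes "norm e = 1"
  shows "(\<Sum>b\<in>Basis. hessian_form f x (reflection e b)) = laplacian f x"
proof -
  let ?H = "\<lambda>c d. pderiv_dir (pderiv_dir f c) d x"
  have parseval: "(\<Sum>b\<in>Basis. (reflection e b \<bullet> c) * (reflection e b \<bullet> d)) = c \<bullet> d" for c d :: 'a
  proof -
    have swap: "reflection e b \<bullet> c = reflection e c \<bullet> b" for b c :: 'a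
      by (subst inner_reflection_left) (rule inner_commute)
    have "(\<Sum>b\<in>Basis. (reflection e b \<bullet> c) * (reflection e b \<bullet> d))
        = (\<Sum>b\<in>Basis. (reflection e c \<bullet> b) * (reflection e d \<bullet> b))"
      by (intro sum.cong refl arg_cong2[where f = "(*)"] swap)
    also have "\<dots> = reflection e c \<bullet> reflection e d"
      by (rule euclidean_inner[symmetric])
    finally show ?thesis
      by (simp add: inner_reflection_reflection[OF assms])
  qed
  have "(\<Sum>b\<in>Basis. hessian_form f x (reflection e b))
      = (\<Sum>b\<in>Basis. \<Sum>c\<in>Basis. \<Sum>d\<in>Basis. (reflection e b \<bullet> c) * (reflection e b \<bullet> d) * ?H c d)"
    by (simp add: hessian_form_def)
  also have "\<dots> = (\<Sum>c\<in>Basis. \<Sum>d\<in>Basis. \<Sum>b\<in>Basis. (reflection e b \<bullet> c) * (reflection e b \<bullet> d) * ?H c d)"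
    by (subst sum.swap) (rule sum.cong[OF refl], rule sum.swap)
  also have "\<dots> = (\<Sum>c\<in>Basis. \<Sum>d\<in>Basis. (\<Sum>b\<in>Basis. (reflection e b \<bullet> c) * (reflection e b \<bullet> d)) * ?H c d)"
    by (simp only: sum_distrib_right)
  also have "\<dots> = (\<Sum>c\<in>Basis. \<Sum>d\<in>Basis. (c \<bullet> d) * ?H c d)"
    by (simp only: parseval)
  also have "\<dots> = (\<Sum>c\<in>Basis. ?H c c)"
  proof (rule sum.cong[OF refl])
    fix c :: 'a assume "c \<in> Basis"
    then have "(c \<bullet> d) * ?H c d = (if d = c then ?H c c else 0)" if "d \<in> Basis" for d
      using that by (auto simp: inner_Basis)
    then show "(\<Sum>d\<in>Basis. (c \<bullet> d) * ?H c d) = ?H c c"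
      using \<open>c \<in> Basis\<close> by simp
  qed
  finally show ?thesis
    by (simp only: laplacian_def)
qed

section \<open>The barrier\<close>

lemma powr_diff_two_mult_square:
  assumes "0 < r"
  shows "r powr (c - 2) * r\<^sup>2 = (r::real) powr c"
proof -
  have "r powr (c - 2) * r\<^sup>2 = r powr (c - 2) * r powr 2"
    using assms by (simp add: powr_numeral)
  also have "\<dots> = r powr c"
    by (simp flip: powr_add)
  finally show ?thesis .
qed

lemma has_derivative_norm_powr:
  fixes x :: "'a::euclidean_space"
  assumes "x \<noteq> 0"
  shows "((\<lambda>y. norm y powr c) has_derivative (\<lambda>h. c * norm x powr (c - 2) * (x \<bullet> h))) (at x)"
proof -
  have "((\<lambda>y. norm y powr c) has_derivative
      (\<lambda>h. norm x powr c * (0 * ln (norm x) + (h \<bullet> sgn x) * c / norm x))) (at x)"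
    using has_derivative_powr[OF has_derivative_norm[OF assms] has_derivative_const] assms by simp
  moreover have "norm x powr c * ((h \<bullet> sgn x) * c / norm x) = c * norm x powr (c - 2) * (x \<bullet> h)" for h
    using assms powr_diff_two_mult_square[of "norm x" c]
    by (simp add: sgn_div_norm inner_commute field_simps power2_eq_square)
  ultimately show ?thesis
    by simp
qed

lemma norm_powr_along_line:
  fixes z v :: "'a::euclidean_space"
  assumes "z + t *\<^sub>R v \<noteq> 0"
  shows "((\<lambda>s. norm (z + s *\<^sub>R v) powr c) has_real_derivative
          c * norm (z + t *\<^sub>R v) powr (c - 2) * ((z + t *\<^sub>R v) \<bullet> v)) (at t)"
proof -
  have "((\<lambda>s. z + s *\<^sub>R v) has_derivative (\<lambda>h. h *\<^sub>R v)) (at t)"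
    by (auto intro!: derivative_eq_intros)
  from has_derivative_compose[OF this has_derivative_norm_powr[OF assms, of c]] show ?thesis
    unfolding has_field_derivative_def
    by (rule has_derivative_eq_rhs) (simp add: fun_eq_iff o_def mult_ac)
qed

lemma inner_along_line: "((\<lambda>s. (z + s *\<^sub>R v) \<bullet> u) has_real_derivative v \<bullet> u) (at t)"
  by (auto intro!: derivative_eq_intros simp: inner_add_left)

definition barrier :: "real \<Rightarrow> 'a::euclidean_space \<Rightarrow> 'a \<Rightarrow> real" where
  "barrier a e x = norm x powr a * (x \<bullet> e)"

definition barrier_deriv :: "real \<Rightarrow> 'a::euclidean_space \<Rightarrow> 'a \<Rightarrow> 'a \<Rightarrow> real" where
  "barrier_deriv a e x v = a * norm x powr (a - 2) * (x \<bullet> v) * (x \<bullet> e) + norm x powr a * (v \<bullet> e)"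

definition barrier_hessian :: "real \<Rightarrow> 'a::euclidean_space \<Rightarrow> 'a \<Rightarrow> 'a \<Rightarrow> real" where
  "barrier_hessian a e x v =
     a * (a - 2) * norm x powr (a - 4) * (x \<bullet> v)\<^sup>2 * (x \<bullet> e)
     + a * norm x powr (a - 2) * ((v \<bullet> v) * (x \<bullet> e) + 2 * (x \<bullet> v) * (v \<bullet> e))"

lemma barrier_along_line:
  fixes z v e :: "'a::euclidean_space"
  assumes "z + t *\<^sub>R v \<noteq> 0"
  shows "((\<lambda>s. barrier a e (z + s *\<^sub>R v)) has_real_derivative barrier_deriv a e (z + t *\<^sub>R v) v) (at t)"
  unfolding barrier_def barrier_deriv_def
  by (rule DERIV_cong[OF DERIV_mult[OF norm_powr_along_line[OF assms] inner_along_line]])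
     (simp add: algebra_simps)

lemma barrier_deriv_along_line:
  fixes z v e :: "'a::euclidean_space"
  assumes "z \<noteq> 0"
  shows "((\<lambda>s. barrier_deriv a e (z + s *\<^sub>R v) v) has_real_derivative barrier_hessian a e z v) (at 0)"
proof -
  have z: "z + 0 *\<^sub>R v \<noteq> 0"
    using assms by simp
  show ?thesis
    unfolding barrier_deriv_def barrier_hessian_def
    by (rule DERIV_cong[OF DERIV_add[OF
          DERIV_mult[OF DERIV_mult[OF DERIV_cmult[OF norm_powr_along_line[OF z]] inner_along_line] inner_along_line]
          DERIV_mult[OF norm_powr_along_line[OF z] DERIV_const]]])
       (simp add: algebra_simps power2_eq_square diff_diff_eq[symmetric])
qed

lemma barrier_deriv_radial:
  assumes "x \<noteq> 0"
  shows "barrier_deriv a e x x = (a + 1) * barrier a e x"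
proof -
  have "norm x powr (a - 2) * (x \<bullet> x) = norm x powr a"
    using assms powr_diff_two_mult_square[of "norm x" a] by (simp add: power2_norm_eq_inner)
  then have "barrier_deriv a e x x = a * norm x powr a * (x \<bullet> e) + norm x powr a * (x \<bullet> e)"
    by (simp add: barrier_deriv_def mult.assoc)
  then show ?thesis
    by (simp add: barrier_def algebra_simps)
qed

lemma sum_barrier_hessian:
  fixes z e :: "'a::euclidean_space"
  assumes "z \<noteq> 0"
  shows "(\<Sum>b\<in>Basis. barrier_hessian a e z b) = a * (a + real DIM('a)) * norm z powr (a - 2) * (z \<bullet> e)"
proof -
  let ?A = "a * (a - 2) * norm z powr (a - 4) * (z \<bullet> e)"
  let ?B = "a * norm z powr (a - 2) * (z \<bullet> e)"
  let ?C = "2 * a * norm z powr (a - 2)"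
  have "barrier_hessian a e z b = ?A * (z \<bullet> b)\<^sup>2 + ?B * (b \<bullet> b) + ?C * ((z \<bullet> b) * (b \<bullet> e))" for b
    by (simp add: barrier_hessian_def algebra_simps)
  then have "(\<Sum>b\<in>Basis. barrier_hessian a e z b)
      = ?A * (\<Sum>b\<in>Basis. (z \<bullet> b)\<^sup>2) + ?B * (\<Sum>b\<in>Basis. b \<bullet> (b::'a)) + ?C * (\<Sum>b\<in>Basis. (z \<bullet> b) * (b \<bullet> e))"
    by (simp add: sum.distrib sum_distrib_left)
  moreover have "(\<Sum>b\<in>Basis. (z \<bullet> b)\<^sup>2) = (norm z)\<^sup>2"
    unfolding power2_norm_eq_inner by (simp add: euclidean_inner[of z z] power2_eq_square)
  moreover have "(\<Sum>b\<in>Basis. (z \<bullet> b) * (b \<bullet> e)) = z \<bullet> e"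
    using euclidean_inner[of z e] by (simp add: inner_commute)
  moreover have "norm z powr (a - 4) * (norm z)\<^sup>2 = norm z powr (a - 2)"
    using powr_diff_two_mult_square[of "norm z" "a - 2"] assms by simp
  ultimately show ?thesis
    by (simp add: algebra_simps)
qed

section \<open>Comparison on a half annulus\<close>

lemma reflection_comparison_local_max_conditions:
  fixes \<phi> :: "'a::euclidean_space \<Rightarrow> real"
  assumes "open U" "0 \<notin> U" and C2: "C2_on U \<phi>"
    and U_reflection: "\<And>x. x \<in> U \<Longrightarrow> reflection e x \<in> U"
    and "0 < \<eta>" "ball z \<eta> \<subseteq> U"
    and max: "\<And>y. y \<in> ball z \<eta> \<Longrightarrow>
      \<phi> y - \<phi> (reflection e y) - \<epsilon> * barrier a e y \<le> \<phi> z - \<phi> (reflection e z) - \<epsilon> * barrier a e z"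
  shows "frechet_derivative \<phi> (at z) v - frechet_derivative \<phi> (at (reflection e z)) (reflection e v)
      = \<epsilon> * barrier_deriv a e z v"
    and "hessian_form \<phi> z v - hessian_form \<phi> (reflection e z) (reflection e v) \<le> \<epsilon> * barrier_hessian a e z v"
proof -
  let ?D = "\<lambda>y v. frechet_derivative \<phi> (at y) v"
  let ?z' = "reflection e z"
  have diff: "\<And>x. x \<in> U \<Longrightarrow> \<phi> differentiable (at x)"
    and diff2: "\<And>x c. x \<in> U \<Longrightarrow> c \<in> Basis \<Longrightarrow> pderiv_dir \<phi> c differentiable (at x)"
    using C2 by (auto simp: C2_on_def)
  have "z \<in> U"
    using \<open>0 < \<eta>\<close> \<open>ball z \<eta> \<subseteq> U\<close> by auto
  then have "?z' \<in> U" "z \<noteq> 0"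
    using U_reflection \<open>0 \<notin> U\<close> by auto
  define G' where "G' t = ?D (z + t *\<^sub>R v) v - ?D (?z' + t *\<^sub>R reflection e v) (reflection e v)
    - \<epsilon> * barrier_deriv a e (z + t *\<^sub>R v) v" for t
  have G': "((\<lambda>s. \<phi> (z + s *\<^sub>R v) - \<phi> (reflection e (z + s *\<^sub>R v)) - \<epsilon> * barrier a e (z + s *\<^sub>R v))
      has_real_derivative G' t) (at t)" if "\<bar>t\<bar> * norm v < \<eta>" for t
  proof -
    have "z + t *\<^sub>R v \<in> U"
      using that \<open>ball z \<eta> \<subseteq> U\<close> by (auto simp: dist_norm)
    then have "?z' + t *\<^sub>R reflection e v \<in> U" "z + t *\<^sub>R v \<noteq> 0"
      using U_reflection[of "z + t *\<^sub>R v"] \<open>0 \<notin> U\<close> by (auto simp: reflection_add_scaleR)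
    then have "((\<lambda>s. \<phi> (z + s *\<^sub>R v) - \<phi> (?z' + s *\<^sub>R reflection e v) - \<epsilon> * barrier a e (z + s *\<^sub>R v))
        has_real_derivative G' t) (at t)"
      unfolding G'_def using diff \<open>z + t *\<^sub>R v \<in> U\<close>
      by (intro DERIV_diff DERIV_cmult has_real_derivative_along_line barrier_along_line) auto
    then show ?thesis
      by (simp add: reflection_add_scaleR)
  qed
  have G'': "(G' has_real_derivative hessian_form \<phi> z v - hessian_form \<phi> ?z' (reflection e v)
      - \<epsilon> * barrier_hessian a e z v) (at 0)"
    unfolding G'_def using \<open>open U\<close> \<open>z \<in> U\<close> \<open>?z' \<in> U\<close> diff diff2 \<open>z \<noteq> 0\<close>
    by (intro DERIV_diff DERIV_cmult hessian_form_along_line barrier_deriv_along_line) auto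
  have "\<And>y. norm (y - z) < \<eta> \<Longrightarrow> \<phi> y - \<phi> (reflection e y) - \<epsilon> * barrier a e y
      \<le> \<phi> z - \<phi> (reflection e z) - \<epsilon> * barrier a e z"
    using max by (simp add: dist_norm norm_minus_commute)
  from local_max_along_line[OF \<open>0 < \<eta>\<close> this G' G'']
  show "?D z v - ?D ?z' (reflection e v) = \<epsilon> * barrier_deriv a e z v"
    and "hessian_form \<phi> z v - hessian_form \<phi> ?z' (reflection e v) \<le> \<epsilon> * barrier_hessian a e z v"
    by (simp_all add: G'_def)
qed

lemma reflection_comparison_no_local_max:
  fixes \<phi> :: "'a::euclidean_space \<Rightarrow> real"
  assumes "open U" "0 \<notin> U" and C2: "C2_on U \<phi>"
    and eqn: "\<And>x. x \<in> U \<Longrightarrow> laplacian \<phi> x = \<gamma> * (x \<bullet> grad \<phi> x) / (norm x)\<^sup>2"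
    and U_reflection: "\<And>x. x \<in> U \<Longrightarrow> reflection e x \<in> U" and e: "norm e = 1"
    and Q: "a * (a + real DIM('a)) - \<gamma> * (a + 1) < 0" and "0 < \<epsilon>"
    and "0 < \<eta>" "ball z \<eta> \<subseteq> U" "0 < z \<bullet> e"
    and max: "\<And>y. y \<in> ball z \<eta> \<Longrightarrow>
      \<phi> y - \<phi> (reflection e y) - \<epsilon> * barrier a e y \<le> \<phi> z - \<phi> (reflection e z) - \<epsilon> * barrier a e z"
  shows False
proof -
  let ?D = "\<lambda>y v. frechet_derivative \<phi> (at y) v"
  let ?z' = "reflection e z"
  let ?P = "norm z powr (a - 2) * (z \<bullet> e)"
  note conditions = reflection_comparison_local_max_conditions[OF \<open>open U\<close> \<open>0 \<notin> U\<close> C2 U_reflection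
      \<open>0 < \<eta>\<close> \<open>ball z \<eta> \<subseteq> U\<close> max]
  have "z \<in> U"
    using \<open>0 < \<eta>\<close> \<open>ball z \<eta> \<subseteq> U\<close> by auto
  then have "?z' \<in> U"
    by (rule U_reflection)
  have "0 < norm z"
    using \<open>0 < z \<bullet> e\<close> by auto
  have diff: "\<phi> differentiable (at z)" "\<phi> differentiable (at ?z')"
    using C2 \<open>z \<in> U\<close> \<open>?z' \<in> U\<close> by (auto simp: C2_on_def)
  \<comment> \<open>Summing the second-order conditions over a basis and its mirror image compares the two
    Laplacians; the equation turns them into radial derivatives, whose difference is the
    first-order condition at \<open>v = z\<close>.\<close>
  have radial: "?D z z - ?D ?z' ?z' = \<epsilon> * (a + 1) * barrier a e z"
    using conditions(1)[of z] barrier_deriv_radial[of z] \<open>0 < norm z\<close> by simp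
  have "(\<Sum>b\<in>Basis. hessian_form \<phi> z b - hessian_form \<phi> ?z' (reflection e b)
      - \<epsilon> * barrier_hessian a e z b) \<le> 0"
    using conditions(2) by (intro sum_nonpos) (simp add: algebra_simps)
  then have "laplacian \<phi> z - laplacian \<phi> ?z' \<le> \<epsilon> * ?P * (a * (a + real DIM('a)))"
    using \<open>0 < norm z\<close>
    by (simp add: sum_subtractf sum_distrib_left[symmetric] laplacian_eq_sum_hessian_form[symmetric]
        sum_hessian_form_reflection[OF e] sum_barrier_hessian mult_ac)
  moreover have "laplacian \<phi> z - laplacian \<phi> ?z' = \<gamma> * (?D z z - ?D ?z' ?z') / (norm z)\<^sup>2"
    using eqn[OF \<open>z \<in> U\<close>] eqn[OF \<open>?z' \<in> U\<close>] inner_grad[OF diff(1)] inner_grad[OF diff(2)]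
      norm_reflection[OF e, of z]
    by (simp add: diff_divide_distrib right_diff_distrib)
  moreover have "\<gamma> * (?D z z - ?D ?z' ?z') / (norm z)\<^sup>2 = \<epsilon> * ?P * (\<gamma> * (a + 1))"
  proof -
    have "barrier a e z = ?P * (norm z)\<^sup>2"
      using powr_diff_two_mult_square[of "norm z" a] \<open>0 < norm z\<close> by (simp add: barrier_def)
    then show ?thesis
      using \<open>0 < norm z\<close> by (simp add: radial)
  qed
  ultimately have "\<epsilon> * ?P * (\<gamma> * (a + 1)) \<le> \<epsilon> * ?P * (a * (a + real DIM('a)))"
    by simp
  moreover have "0 < \<epsilon> * ?P"
    using \<open>0 < \<epsilon>\<close> \<open>0 < z \<bullet> e\<close> \<open>0 < norm z\<close> by simp
  ultimately show False
    using Q by (simp add: mult_le_cancel_left_pos)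
qed

lemma compact_half_annulus: "compact {x::'a::euclidean_space. \<delta> \<le> norm x \<and> norm x \<le> \<rho> \<and> 0 \<le> x \<bullet> e}"
  unfolding compact_eq_bounded_closed bounded_iff
  by (intro conjI closed_Collect_conj closed_Collect_le continuous_intros) auto

lemma ball_subset_half_annulus:
  fixes z e :: "'a::euclidean_space"
  assumes "norm e = 1" "\<delta> < norm z" "norm z < \<rho>" "0 < z \<bullet> e"
  obtains \<eta> where "0 < \<eta>" "ball z \<eta> \<subseteq> {x. \<delta> \<le> norm x \<and> norm x \<le> \<rho> \<and> 0 \<le> x \<bullet> e}"
proof
  define \<eta> where "\<eta> = min (norm z - \<delta>) (min (\<rho> - norm z) (z \<bullet> e))"
  show "0 < \<eta>"
    using assms by (simp add: \<eta>_def)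
  show "ball z \<eta> \<subseteq> {x. \<delta> \<le> norm x \<and> norm x \<le> \<rho> \<and> 0 \<le> x \<bullet> e}"
  proof
    fix y assume "y \<in> ball z \<eta>"
    then have "norm (y - z) < \<eta>"
      by (simp add: dist_norm norm_minus_commute)
    moreover have "\<bar>norm y - norm z\<bar> \<le> norm (y - z)" "\<bar>(y - z) \<bullet> e\<bar> \<le> norm (y - z)"
      using norm_triangle_ineq3[of y z] Cauchy_Schwarz_ineq2[of "y - z" e] \<open>norm e = 1\<close> by auto
    ultimately show "y \<in> {x. \<delta> \<le> norm x \<and> norm x \<le> \<rho> \<and> 0 \<le> x \<bullet> e}"
      by (auto simp: \<eta>_def inner_diff_left)
  qed
qed

lemma reflection_comparison_half_annulus:
  fixes \<phi> :: "'a::euclidean_space \<Rightarrow> real"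
  assumes "open U" "0 \<notin> U" and C2: "C2_on U \<phi>"
    and eqn: "\<And>x. x \<in> U \<Longrightarrow> laplacian \<phi> x = \<gamma> * (x \<bullet> grad \<phi> x) / (norm x)\<^sup>2"
    and U_reflection: "\<And>x. x \<in> U \<Longrightarrow> reflection e x \<in> U" and e: "norm e = 1"
    and Q: "a * (a + real DIM('a)) - \<gamma> * (a + 1) < 0" and "0 < \<epsilon>" "0 < \<delta>"
    and K_U: "{x. \<delta> \<le> norm x \<and> norm x \<le> \<rho> \<and> 0 \<le> x \<bullet> e} \<subseteq> U"
    and inner: "\<And>x. norm x = \<delta> \<Longrightarrow> 0 \<le> x \<bullet> e \<Longrightarrow> \<phi> x - \<phi> (reflection e x) \<le> \<epsilon> * barrier a e x"
    and outer: "\<And>x. norm x = \<rho> \<Longrightarrow> 0 \<le> x \<bullet> e \<Longrightarrow> \<phi> x - \<phi> (reflection e x) \<le> \<epsilon>"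
    and x: "\<delta> \<le> norm x" "norm x \<le> \<rho>" "0 \<le> x \<bullet> e"
  shows "\<phi> x - \<phi> (reflection e x) \<le> \<epsilon> * (barrier a e x + 1)"
proof (rule ccontr)
  define K where "K = {x. \<delta> \<le> norm x \<and> norm x \<le> \<rho> \<and> 0 \<le> x \<bullet> e}"
  define f where "f y = \<phi> y - \<phi> (reflection e y) - \<epsilon> * (barrier a e y + 1)" for y
  assume "\<not> ?thesis"
  then have "0 < f x"
    by (simp add: f_def)
  have "continuous_on U \<phi>"
    using C2 by (auto simp: C2_on_def intro!: continuous_at_imp_continuous_on differentiable_imp_continuous_within)
  then have "continuous_on K f"
    unfolding f_def barrier_def using K_U \<open>0 < \<delta>\<close> U_reflection
    by (intro continuous_intros continuous_on_compose2[OF \<open>continuous_on U \<phi>\<close> continuous_on_reflection]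
          continuous_on_subset[OF \<open>continuous_on U \<phi>\<close>])
       (auto simp: K_def)
  then obtain z where "z \<in> K" and z_max: "\<And>y. y \<in> K \<Longrightarrow> f y \<le> f z"
    using continuous_attains_sup[OF compact_half_annulus[of \<delta> \<rho> e, folded K_def]] x by (auto simp: K_def)
  have "0 < f z"
    using z_max[of x] x \<open>0 < f x\<close> by (auto simp: K_def)
  \<comment> \<open>The summand \<open>+ 1\<close> makes \<open>f\<close> negative on the hyperplane \<open>z \<bullet> e = 0\<close>.\<close>
  have "0 < z \<bullet> e"
  proof (rule ccontr)
    assume "\<not> 0 < z \<bullet> e"
    then have "z \<bullet> e = 0"
      using \<open>z \<in> K\<close> by (simp add: K_def)
    then show False
      using \<open>0 < f z\<close> \<open>0 < \<epsilon>\<close> by (simp add: f_def barrier_def reflection_eq_self)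
  qed
  moreover have "\<delta> < norm z"
  proof (rule ccontr)
    assume "\<not> \<delta> < norm z"
    then show False
      using \<open>z \<in> K\<close> inner[of z] \<open>0 < f z\<close> \<open>0 < \<epsilon>\<close> by (simp add: K_def f_def algebra_simps)
  qed
  moreover have "norm z < \<rho>"
  proof (rule ccontr)
    assume "\<not> norm z < \<rho>"
    moreover have "0 \<le> \<epsilon> * barrier a e z"
      using \<open>0 < \<epsilon>\<close> \<open>0 < z \<bullet> e\<close> by (simp add: barrier_def)
    ultimately show False
      using \<open>z \<in> K\<close> outer[of z] \<open>0 < f z\<close> by (simp add: K_def f_def algebra_simps)
  qed
  ultimately obtain \<eta> where "0 < \<eta>" "ball z \<eta> \<subseteq> K"
    using ball_subset_half_annulus[OF e] unfolding K_def by blast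
  show False
  proof (rule reflection_comparison_no_local_max[OF \<open>open U\<close> \<open>0 \<notin> U\<close> C2 eqn U_reflection e Q \<open>0 < \<epsilon>\<close> \<open>0 < \<eta>\<close>])
    show "ball z \<eta> \<subseteq> U" "0 < z \<bullet> e"
      using \<open>ball z \<eta> \<subseteq> K\<close> K_U \<open>0 < z \<bullet> e\<close> by (auto simp: K_def)
    fix y assume "y \<in> ball z \<eta>"
    then show "\<phi> y - \<phi> (reflection e y) - \<epsilon> * barrier a e y \<le> \<phi> z - \<phi> (reflection e z) - \<epsilon> * barrier a e z"
      using z_max[of y] \<open>ball z \<eta> \<subseteq> K\<close> by (auto simp: f_def algebra_simps)
  qed
qed

section \<open>Estimates on the inner and outer spheres\<close>

lemma punct_ball_norm_le: "x \<in> punct_ball R \<Longrightarrow> 0 < norm y \<Longrightarrow> norm y \<le> norm x \<Longrightarrow> y \<in> punct_ball R"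
  unfolding punct_ball_def using order.strict_trans1[of "ereal (norm y)" "ereal (norm x)" R] by auto

lemma reflection_in_punct_ball: "norm e = 1 \<Longrightarrow> x \<in> punct_ball R \<Longrightarrow> reflection e x \<in> punct_ball R"
  unfolding punct_ball_def using norm_reflection[of e x] by (simp del: zero_less_norm_iff)

lemma open_punct_ball: "open (punct_ball R :: 'a::euclidean_space set)"
proof (cases R)
  case (real r)
  have "punct_ball R = {x::'a. 0 < norm x} \<inter> {x. norm x < r}"
    by (auto simp: punct_ball_def real)
  show ?thesis
    unfolding \<open>punct_ball R = _\<close> by (intro open_Int open_Collect_less continuous_intros)
next
  case PInf
  have "punct_ball R = {x::'a. 0 < norm x}"
    by (auto simp: punct_ball_def PInf)
  show ?thesis
    unfolding \<open>punct_ball R = _\<close> by (intro open_Collect_less continuous_intros)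
qed (simp add: punct_ball_def)

lemma norm_diff_scaleR_unit_squared:
  "norm e = 1 \<Longrightarrow> (norm (x - t *\<^sub>R e))\<^sup>2 = (norm x)\<^sup>2 - t * (2 * (x \<bullet> e) - t)"
proof -
  assume "norm e = 1"
  have "(norm (x - t *\<^sub>R e))\<^sup>2 = x \<bullet> x - 2 * t * (x \<bullet> e) + t\<^sup>2 * (e \<bullet> e)"
    unfolding power2_norm_eq_inner
    by (simp add: inner_diff_left inner_diff_right inner_commute algebra_simps power2_eq_square)
  also have "\<dots> = (norm x)\<^sup>2 - t * (2 * (x \<bullet> e) - t)"
    using \<open>norm e = 1\<close> unfolding power2_norm_eq_inner norm_eq_1
    by (simp add: algebra_simps power2_eq_square)
  finally show ?thesis .
qed

lemma norm_diff_scaleR_unit_bounds: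
  fixes x e :: "'a::real_inner"
  assumes e: "norm e = 1" and "2 * (x \<bullet> e) < norm x" "0 \<le> t" "t \<le> 2 * (x \<bullet> e)"
  shows "norm x / 2 \<le> norm (x - t *\<^sub>R e)" "norm (x - t *\<^sub>R e) \<le> norm x"
proof -
  have "(x \<bullet> e)\<^sup>2 < (norm x / 2)\<^sup>2"
    using assms by (intro power_strict_mono) auto
  have "0 \<le> (t - x \<bullet> e)\<^sup>2"
    by simp
  then have "t * (2 * (x \<bullet> e) - t) \<le> (x \<bullet> e)\<^sup>2"
    by (simp add: power2_eq_square algebra_simps)
  moreover have "0 \<le> t * (2 * (x \<bullet> e) - t)"
    using assms by simp
  moreover have "(norm x / 2)\<^sup>2 = (norm x)\<^sup>2 / 4"
    by (simp add: power_divide)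
  ultimately have "(norm x / 2)\<^sup>2 \<le> (norm (x - t *\<^sub>R e))\<^sup>2" "(norm (x - t *\<^sub>R e))\<^sup>2 \<le> (norm x)\<^sup>2"
    using norm_diff_scaleR_unit_squared[OF e, of x t] \<open>(x \<bullet> e)\<^sup>2 < (norm x / 2)\<^sup>2\<close> by linarith+
  then show "norm x / 2 \<le> norm (x - t *\<^sub>R e)" "norm (x - t *\<^sub>R e) \<le> norm x"
    by (auto intro: power2_le_imp_le)
qed

lemma reflection_difference_mean_value:
  fixes \<phi> :: "'a::euclidean_space \<Rightarrow> real"
  assumes "0 < x \<bullet> e"
    and diff: "\<And>t. 0 \<le> t \<Longrightarrow> t \<le> 2 * (x \<bullet> e) \<Longrightarrow> \<phi> differentiable (at (x - t *\<^sub>R e))"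
  obtains t where "0 < t" "t < 2 * (x \<bullet> e)"
    "\<phi> x - \<phi> (reflection e x) = 2 * (x \<bullet> e) * frechet_derivative \<phi> (at (x - t *\<^sub>R e)) e"
proof -
  have "((\<lambda>s. \<phi> (x - s *\<^sub>R e)) has_real_derivative - frechet_derivative \<phi> (at (x - t *\<^sub>R e)) e) (at t)"
    if "0 \<le> t" "t \<le> 2 * (x \<bullet> e)" for t
  proof -
    have "linear (frechet_derivative \<phi> (at (x - t *\<^sub>R e)))"
      using diff[OF that] frechet_derivative_works has_derivative_linear by blast
    then show ?thesis
      using has_real_derivative_along_line[of \<phi> x t "- e"] diff[OF that] by (simp add: linear_neg)
  qed
  from MVT2[of 0 "2 * (x \<bullet> e)", OF _ this] \<open>0 < x \<bullet> e\<close> obtain t where "0 < t" "t < 2 * (x \<bullet> e)"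
    "\<phi> (x - (2 * (x \<bullet> e)) *\<^sub>R e) - \<phi> (x - 0 *\<^sub>R e)
      = (2 * (x \<bullet> e) - 0) * - frechet_derivative \<phi> (at (x - t *\<^sub>R e)) e"
    by auto
  with that show ?thesis
    by (simp add: reflection_def)
qed

lemma abs_reflection_difference_le_from_values:
  fixes \<phi> :: "'a::euclidean_space \<Rightarrow> real"
  assumes bound: "\<And>y. y \<in> punct_ball R \<Longrightarrow> norm y powr \<sigma> * \<bar>\<phi> y\<bar> \<le> C"
    and "0 \<le> \<sigma>" and e: "norm e = 1" and x: "x \<in> punct_ball R" "norm x \<le> 2 * (x \<bullet> e)"
  shows "\<bar>\<phi> x - \<phi> (reflection e x)\<bar> \<le> 2 powr (\<sigma> + 2) * C * (x \<bullet> e) / norm x powr (\<sigma> + 1)"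
proof -
  define r where "r = norm x"
  have "0 < r"
    using x by (simp add: punct_ball_def r_def)
  have "0 \<le> norm x powr \<sigma> * \<bar>\<phi> x\<bar>"
    by simp
  then have "0 \<le> C"
    using bound[OF x(1)] by linarith
  have "0 \<le> x \<bullet> e"
    using x(2) norm_ge_zero[of x] by linarith
  have "\<bar>\<phi> y\<bar> \<le> C / r powr \<sigma>" if "y \<in> punct_ball R" "norm y = r" for y
    using bound[OF that(1)] that(2) \<open>0 < r\<close> by (simp add: field_simps)
  then have "\<bar>\<phi> x\<bar> \<le> C / r powr \<sigma>" "\<bar>\<phi> (reflection e x)\<bar> \<le> C / r powr \<sigma>"
    using x(1) reflection_in_punct_ball[OF e x(1)] norm_reflection[OF e, of x] by (auto simp: r_def)
  moreover have "2 * C * r / r powr (\<sigma> + 1) = 2 * (C / r powr \<sigma>)"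
    using \<open>0 < r\<close> by (simp add: powr_add)
  ultimately have "\<bar>\<phi> x - \<phi> (reflection e x)\<bar> \<le> 2 * C * r / r powr (\<sigma> + 1)"
    by linarith
  also have "\<dots> \<le> 2 powr (\<sigma> + 2) * C * (x \<bullet> e) / r powr (\<sigma> + 1)"
  proof (rule divide_right_mono)
    have "(4::real) \<le> 2 powr (\<sigma> + 2)"
      using powr_mono[of 2 "\<sigma> + 2" 2] \<open>0 \<le> \<sigma>\<close> by simp
    have "2 * C * r \<le> 4 * C * (x \<bullet> e)"
      using mult_left_mono[OF x(2), of "2 * C"] \<open>0 \<le> C\<close> by (simp add: r_def)
    also have "\<dots> \<le> 2 powr (\<sigma> + 2) * C * (x \<bullet> e)"
      using \<open>0 \<le> x \<bullet> e\<close> \<open>0 \<le> C\<close> \<open>4 \<le> 2 powr (\<sigma> + 2)\<close>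
      by (intro mult_right_mono) (auto simp: r_def)
    finally show "2 * C * r \<le> 2 powr (\<sigma> + 2) * C * (x \<bullet> e)" .
  qed simp
  finally show ?thesis
    by (simp add: r_def)
qed

lemma abs_reflection_difference_le_from_gradient:
  fixes \<phi> :: "'a::euclidean_space \<Rightarrow> real"
  assumes diff: "\<And>y. y \<in> punct_ball R \<Longrightarrow> \<phi> differentiable (at y)"
    and bound: "\<And>y. y \<in> punct_ball R \<Longrightarrow> norm y powr (\<sigma> + 1) * norm (grad \<phi> y) \<le> C"
    and "0 \<le> \<sigma>" and e: "norm e = 1"
    and x: "x \<in> punct_ball R" "0 \<le> x \<bullet> e" "2 * (x \<bullet> e) < norm x"
  shows "\<bar>\<phi> x - \<phi> (reflection e x)\<bar> \<le> 2 powr (\<sigma> + 2) * C * (x \<bullet> e) / norm x powr (\<sigma> + 1)"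
proof (cases "x \<bullet> e = 0")
  case False
  with x(2) have "0 < x \<bullet> e"
    by simp
  define r where "r = norm x"
  have "0 < r"
    using x by (simp add: punct_ball_def r_def)
  \<comment> \<open>Since \<open>x\<close> is close to the hyperplane, the segment from \<open>x\<close> to its reflection stays
    outside the ball of radius \<open>|x| / 2\<close>, where the gradient bound is uniform.\<close>
  have segment: "x - t *\<^sub>R e \<in> punct_ball R" "r / 2 \<le> norm (x - t *\<^sub>R e)"
    if "0 \<le> t" "t \<le> 2 * (x \<bullet> e)" for t
  proof -
    have "r / 2 \<le> norm (x - t *\<^sub>R e)" "norm (x - t *\<^sub>R e) \<le> norm x"
      using norm_diff_scaleR_unit_bounds[OF e x(3) that] by (simp_all add: r_def)
    moreover from this have "0 < norm (x - t *\<^sub>R e)"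
      using \<open>0 < r\<close> by linarith
    ultimately show "x - t *\<^sub>R e \<in> punct_ball R" "r / 2 \<le> norm (x - t *\<^sub>R e)"
      using punct_ball_norm_le[OF x(1), of "x - t *\<^sub>R e"] by auto
  qed
  obtain t where t: "0 < t" "t < 2 * (x \<bullet> e)"
    and mvt: "\<phi> x - \<phi> (reflection e x) = 2 * (x \<bullet> e) * frechet_derivative \<phi> (at (x - t *\<^sub>R e)) e"
    using reflection_difference_mean_value[OF \<open>0 < x \<bullet> e\<close>] segment(1) diff by blast
  define y where "y = x - t *\<^sub>R e"
  have "y \<in> punct_ball R" "r / 2 \<le> norm y"
    using segment[of t] t by (auto simp: y_def)
  have "(r / 2) powr (\<sigma> + 1) * norm (grad \<phi> y) \<le> norm y powr (\<sigma> + 1) * norm (grad \<phi> y)"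
    using \<open>r / 2 \<le> norm y\<close> \<open>0 < r\<close> \<open>0 \<le> \<sigma>\<close> by (intro mult_right_mono powr_mono2) auto
  then have "norm (grad \<phi> y) \<le> C / (r / 2) powr (\<sigma> + 1)"
    using bound[OF \<open>y \<in> punct_ball R\<close>] \<open>0 < r\<close> by (simp add: pos_le_divide_eq mult.commute)
  also have "\<dots> = 2 powr (\<sigma> + 1) * C / r powr (\<sigma> + 1)"
    using \<open>0 < r\<close> by (simp add: powr_divide)
  finally have D: "\<bar>frechet_derivative \<phi> (at y) e\<bar> \<le> 2 powr (\<sigma> + 1) * C / r powr (\<sigma> + 1)"
    using abs_frechet_derivative_le_norm_grad[OF diff[OF \<open>y \<in> punct_ball R\<close>] e] by linarith
  have "\<bar>\<phi> x - \<phi> (reflection e x)\<bar> \<le> 2 * (x \<bullet> e) * (2 powr (\<sigma> + 1) * C / r powr (\<sigma> + 1))"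
    using mvt mult_left_mono[OF D, of "2 * (x \<bullet> e)"] \<open>0 < x \<bullet> e\<close> by (simp add: y_def abs_mult)
  also have "\<dots> = 2 powr (\<sigma> + 2) * C * (x \<bullet> e) / r powr (\<sigma> + 1)"
    by (simp add: powr_add)
  finally show ?thesis
    by (simp add: r_def)
qed (simp add: reflection_eq_self)

lemma abs_reflection_difference_le:
  fixes \<phi> :: "'a::euclidean_space \<Rightarrow> real"
  assumes diff: "\<And>y. y \<in> punct_ball R \<Longrightarrow> \<phi> differentiable (at y)"
    and bound: "\<And>y. y \<in> punct_ball R \<Longrightarrow>
      norm y powr \<sigma> * \<bar>\<phi> y\<bar> + norm y powr (\<sigma> + 1) * norm (grad \<phi> y) \<le> C"
    and "0 \<le> \<sigma>" and e: "norm e = 1" and x: "x \<in> punct_ball R" "0 \<le> x \<bullet> e"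
  shows "\<bar>\<phi> x - \<phi> (reflection e x)\<bar> \<le> 2 powr (\<sigma> + 2) * C * (x \<bullet> e) / norm x powr (\<sigma> + 1)"
proof -
  have nonneg: "0 \<le> norm y powr \<sigma> * \<bar>\<phi> y\<bar>" "0 \<le> norm y powr (\<sigma> + 1) * norm (grad \<phi> y)" for y
    by simp_all
  have "norm y powr \<sigma> * \<bar>\<phi> y\<bar> \<le> C" "norm y powr (\<sigma> + 1) * norm (grad \<phi> y) \<le> C"
    if "y \<in> punct_ball R" for y
    using bound[OF that] nonneg[of y] by linarith+
  then show ?thesis
    using abs_reflection_difference_le_from_values[OF _ \<open>0 \<le> \<sigma>\<close> e x(1)]
      abs_reflection_difference_le_from_gradient[OF diff _ \<open>0 \<le> \<sigma>\<close> e x] by (cases "norm x \<le> 2 * (x \<bullet> e)") auto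
qed

lemma reflection_difference_le_barrier_near_origin:
  fixes \<phi> :: "'a::euclidean_space \<Rightarrow> real"
  assumes diff: "\<And>y. y \<in> punct_ball R \<Longrightarrow> \<phi> differentiable (at y)"
    and bound: "\<And>y. y \<in> punct_ball R \<Longrightarrow>
      norm y powr \<sigma> * \<bar>\<phi> y\<bar> + norm y powr (\<sigma> + 1) * norm (grad \<phi> y) \<le> C"
    and "0 \<le> \<sigma>" "a + \<sigma> + 1 < 0" and e: "norm e = 1" and "x \<in> punct_ball R" "0 < \<epsilon>"
  obtains \<delta> where "0 < \<delta>" "\<delta> \<le> norm x"
    "\<And>y. norm y = \<delta> \<Longrightarrow> 0 \<le> y \<bullet> e \<Longrightarrow> \<phi> y - \<phi> (reflection e y) \<le> \<epsilon> * barrier a e y"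
proof -
  have "0 < norm x"
    using \<open>x \<in> punct_ball R\<close> by (simp add: punct_ball_def)
  have "eventually (\<lambda>\<delta>. 2 powr (\<sigma> + 2) * C \<le> \<epsilon> * \<delta> powr (a + \<sigma> + 1)) (at_right 0)"
    using \<open>a + \<sigma> + 1 < 0\<close> \<open>0 < \<epsilon>\<close> by real_asymp
  then obtain b where "0 < b" and b: "\<And>\<delta>. 0 < \<delta> \<Longrightarrow> \<delta> < b \<Longrightarrow> 2 powr (\<sigma> + 2) * C \<le> \<epsilon> * \<delta> powr (a + \<sigma> + 1)"
    by (auto simp: eventually_at_right_field)
  define \<delta> where "\<delta> = min (b / 2) (norm x)"
  have "0 < \<delta>" "\<delta> \<le> norm x" "\<delta> < b"
    using \<open>0 < b\<close> \<open>0 < norm x\<close> by (auto simp: \<delta>_def)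
  then show thesis
  proof (intro that)
    fix y assume y: "norm y = \<delta>" "0 \<le> y \<bullet> e"
    then have "y \<in> punct_ball R"
      using punct_ball_norm_le[OF \<open>x \<in> punct_ball R\<close>] \<open>0 < \<delta>\<close> \<open>\<delta> \<le> norm x\<close> by auto
    have "\<phi> y - \<phi> (reflection e y) \<le> 2 powr (\<sigma> + 2) * C * (y \<bullet> e) / \<delta> powr (\<sigma> + 1)"
      using abs_reflection_difference_le[OF diff bound \<open>0 \<le> \<sigma>\<close> e \<open>y \<in> punct_ball R\<close> y(2)] y(1) by simp
    also have "\<dots> \<le> \<epsilon> * \<delta> powr (a + \<sigma> + 1) * (y \<bullet> e) / \<delta> powr (\<sigma> + 1)"
      using b[OF \<open>0 < \<delta>\<close> \<open>\<delta> < b\<close>] y(2) by (intro divide_right_mono mult_right_mono) auto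
    also have "\<dots> = \<epsilon> * barrier a e y"
      using \<open>0 < \<delta>\<close> y(1) by (simp add: barrier_def powr_add)
    finally show "\<phi> y - \<phi> (reflection e y) \<le> \<epsilon> * barrier a e y" .
  qed
qed

lemma boundary_limit_imp_small_on_sphere:
  fixes \<phi> :: "'a::euclidean_space \<Rightarrow> real"
  assumes lim: "\<And>y. norm y = R0 \<Longrightarrow> (\<phi> \<longlongrightarrow> 0) (at y within punct_ball (ereal R0))"
    and "0 < \<epsilon>" "0 \<le> r" "r < R0"
  obtains \<rho> where "r < \<rho>" "\<rho> < R0" "\<And>x. norm x = \<rho> \<Longrightarrow> \<bar>\<phi> x\<bar> < \<epsilon>"
proof -
  define \<G> where "\<G> = {ball y d | y d. norm y = R0 \<and>
    (\<forall>x\<in>punct_ball (ereal R0). x \<noteq> y \<and> dist x y < d \<longrightarrow> \<bar>\<phi> x\<bar> < \<epsilon>)}"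
  have "sphere 0 R0 \<subseteq> \<Union>\<G>"
  proof
    fix y :: 'a assume "y \<in> sphere 0 R0"
    then have "norm y = R0"
      by simp
    from lim[OF this] \<open>0 < \<epsilon>\<close> obtain d where "0 < d"
      "\<forall>x\<in>punct_ball (ereal R0). x \<noteq> y \<and> dist x y < d \<longrightarrow> \<bar>\<phi> x\<bar> < \<epsilon>"
      unfolding tendsto_iff eventually_at by (auto simp: dist_real_def)
    with \<open>norm y = R0\<close> show "y \<in> \<Union>\<G>"
      unfolding \<G>_def by (intro UnionI[of "ball y d"]) auto
  qed
  moreover have "\<And>G. G \<in> \<G> \<Longrightarrow> open G"
    by (auto simp: \<G>_def)
  ultimately obtain \<eta> where "0 < \<eta>" and \<eta>: "\<And>y. y \<in> sphere 0 R0 \<Longrightarrow> \<exists>G\<in>\<G>. ball y \<eta> \<subseteq> G"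
    using Heine_Borel_lemma[OF compact_sphere] by metis
  define \<rho> where "\<rho> = max ((r + R0) / 2) (R0 - \<eta> / 2)"
  have "r < \<rho>" "\<rho> < R0" "R0 - \<rho> < \<eta>"
    using \<open>r < R0\<close> \<open>0 < \<eta>\<close> by (auto simp: \<rho>_def less_max_iff_disj)
  show thesis
  proof (rule that[OF \<open>r < \<rho>\<close> \<open>\<rho> < R0\<close>])
    fix x :: 'a assume "norm x = \<rho>"
    have "0 < \<rho>"
      using \<open>0 \<le> r\<close> \<open>r < \<rho>\<close> by linarith
    define y where "y = (R0 / \<rho>) *\<^sub>R x"
    have "norm y = R0"
      using \<open>0 < \<rho>\<close> \<open>\<rho> < R0\<close> by (simp add: y_def \<open>norm x = \<rho>\<close>)
    have "y - x = (R0 / \<rho> - 1) *\<^sub>R x"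
      by (simp add: y_def algebra_simps)
    then have "dist x y = R0 - \<rho>"
      using \<open>0 < \<rho>\<close> \<open>\<rho> < R0\<close> by (simp add: dist_norm norm_minus_commute \<open>norm x = \<rho>\<close> field_simps)
    then have "x \<in> ball y \<eta>"
      using \<open>R0 - \<rho> < \<eta>\<close> by (simp add: dist_commute)
    then obtain y' d where "x \<in> ball y' d" "norm y' = R0"
      and small: "\<forall>x\<in>punct_ball (ereal R0). x \<noteq> y' \<and> dist x y' < d \<longrightarrow> \<bar>\<phi> x\<bar> < \<epsilon>"
      using \<eta>[of y] \<open>norm y = R0\<close> unfolding \<G>_def by auto
    moreover have "x \<in> punct_ball (ereal R0)" "x \<noteq> y'"
      using \<open>norm x = \<rho>\<close> \<open>0 < \<rho>\<close> \<open>\<rho> < R0\<close> \<open>norm y' = R0\<close> by (auto simp: punct_ball_def)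
    ultimately show "\<bar>\<phi> x\<bar> < \<epsilon>"
      by (auto simp: dist_commute)
  qed
qed

lemma weighted_bound_imp_small_on_sphere:
  fixes \<phi> :: "'a::real_normed_vector \<Rightarrow> real"
  assumes bound: "\<And>x. x \<noteq> 0 \<Longrightarrow> norm x powr \<sigma> * \<bar>\<phi> x\<bar> \<le> C" and "0 < \<sigma>" "0 < \<epsilon>"
  obtains \<rho> where "r < \<rho>" "\<And>x. norm x = \<rho> \<Longrightarrow> \<bar>\<phi> x\<bar> \<le> \<epsilon>"
proof -
  have "eventually (\<lambda>\<rho>. C \<le> \<epsilon> * \<rho> powr \<sigma>) at_top"
    using \<open>0 < \<sigma>\<close> \<open>0 < \<epsilon>\<close> by real_asymp
  moreover have "eventually (\<lambda>\<rho>. max r 0 < \<rho>) at_top"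
    by (rule eventually_gt_at_top)
  ultimately have "eventually (\<lambda>\<rho>. C \<le> \<epsilon> * \<rho> powr \<sigma> \<and> max r 0 < \<rho>) at_top"
    by eventually_elim simp
  from eventually_happens'[OF trivial_limit_at_top_linorder this]
  obtain \<rho> where "C \<le> \<epsilon> * \<rho> powr \<sigma>" "max r 0 < \<rho>"
    by blast
  then show thesis
  proof (intro that)
    fix x :: 'a assume "norm x = \<rho>"
    moreover from this have "x \<noteq> 0"
      using \<open>max r 0 < \<rho>\<close> by auto
    ultimately have "\<rho> powr \<sigma> * \<bar>\<phi> x\<bar> \<le> \<rho> powr \<sigma> * \<epsilon>"
      using bound[of x] \<open>C \<le> \<epsilon> * \<rho> powr \<sigma>\<close> by (metis mult.commute order_trans)
    then show "\<bar>\<phi> x\<bar> \<le> \<epsilon>"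
      using \<open>max r 0 < \<rho>\<close> by (simp add: mult_le_cancel_left_pos)
  qed auto
qed

lemma X_space_small_on_sphere:
  fixes \<phi> :: "'a::euclidean_space \<Rightarrow> real"
  assumes X: "X_space \<sigma> R \<phi>" and "0 < \<sigma>" "0 < \<epsilon>" "0 \<le> r" "ereal r < R"
  obtains \<rho> where "r < \<rho>" "ereal \<rho> < R" "\<And>x. norm x = \<rho> \<Longrightarrow> \<bar>\<phi> x\<bar> \<le> \<epsilon>"
proof (cases R)
  case (real R0)
  with X have "\<And>y. norm y = R0 \<Longrightarrow> (\<phi> \<longlongrightarrow> 0) (at y within punct_ball (ereal R0))"
    by (simp add: X_space_def)
  from boundary_limit_imp_small_on_sphere[OF this \<open>0 < \<epsilon>\<close> \<open>0 \<le> r\<close>] \<open>ereal r < R\<close> real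
  show thesis
    using that by (metis less_ereal.simps(1) less_imp_le)
next
  case PInf
  obtain C where bound: "\<And>x. x \<in> punct_ball R \<Longrightarrow>
      norm x powr \<sigma> * \<bar>\<phi> x\<bar> + norm x powr (\<sigma> + 1) * norm (grad \<phi> x) \<le> C"
    using X by (auto simp: X_space_def)
  have "norm x powr \<sigma> * \<bar>\<phi> x\<bar> \<le> C" if "x \<noteq> 0" for x
  proof -
    have "x \<in> punct_ball R"
      using that PInf by (simp add: punct_ball_def)
    moreover have "0 \<le> norm x powr (\<sigma> + 1) * norm (grad \<phi> x)"
      by simp
    ultimately show ?thesis
      using bound[of x] by linarith
  qed
  from weighted_bound_imp_small_on_sphere[OF this \<open>0 < \<sigma>\<close> \<open>0 < \<epsilon>\<close>] show thesis
    using that PInf by auto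
next
  case MInf
  with \<open>ereal r < R\<close> show thesis
    by simp
qed

section \<open>Reflection symmetry\<close>

lemma reflection_difference_le_barrier:
  fixes \<phi> :: "'a::euclidean_space \<Rightarrow> real"
  assumes C2: "C2_on (punct_ball R) \<phi>" and X: "X_space \<sigma> R \<phi>" and "0 < \<sigma>"
    and eqn: "\<And>x. x \<in> punct_ball R \<Longrightarrow> laplacian \<phi> x = \<gamma> * (x \<bullet> grad \<phi> x) / (norm x)\<^sup>2"
    and Q: "a * (a + real DIM('a)) - \<gamma> * (a + 1) < 0" and "a + \<sigma> + 1 < 0"
    and e: "norm e = 1" and x: "x \<in> punct_ball R" "0 \<le> x \<bullet> e" and "0 < \<epsilon>"
  shows "\<phi> x - \<phi> (reflection e x) \<le> \<epsilon> * (barrier a e x + 1)"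
proof -
  obtain C where bound: "\<And>y. y \<in> punct_ball R \<Longrightarrow>
      norm y powr \<sigma> * \<bar>\<phi> y\<bar> + norm y powr (\<sigma> + 1) * norm (grad \<phi> y) \<le> C"
    using X by (auto simp: X_space_def)
  have diff: "\<And>y. y \<in> punct_ball R \<Longrightarrow> \<phi> differentiable (at y)"
    using C2 by (simp add: C2_on_def)
  obtain \<delta> where "0 < \<delta>" "\<delta> \<le> norm x"
    and inner: "\<And>y. norm y = \<delta> \<Longrightarrow> 0 \<le> y \<bullet> e \<Longrightarrow> \<phi> y - \<phi> (reflection e y) \<le> \<epsilon> * barrier a e y"
    using reflection_difference_le_barrier_near_origin[OF diff bound _ \<open>a + \<sigma> + 1 < 0\<close> e x(1) \<open>0 < \<epsilon>\<close>]
      \<open>0 < \<sigma>\<close> by auto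
  obtain \<rho> where "norm x < \<rho>" "ereal \<rho> < R" and small: "\<And>y. norm y = \<rho> \<Longrightarrow> \<bar>\<phi> y\<bar> \<le> \<epsilon> / 2"
    using X_space_small_on_sphere[OF X \<open>0 < \<sigma>\<close>, of "\<epsilon> / 2" "norm x"] \<open>0 < \<epsilon>\<close> x(1)
    by (auto simp: punct_ball_def)
  have outer: "\<phi> y - \<phi> (reflection e y) \<le> \<epsilon>" if "norm y = \<rho>" for y
    using small[of y] small[of "reflection e y"] that norm_reflection[OF e, of y] by linarith
  have "{y. \<delta> \<le> norm y \<and> norm y \<le> \<rho> \<and> 0 \<le> y \<bullet> e} \<subseteq> punct_ball R"
    using \<open>0 < \<delta>\<close> by (auto simp: punct_ball_def intro: order.strict_trans1[OF _ \<open>ereal \<rho> < R\<close>])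
  from reflection_comparison_half_annulus[OF open_punct_ball _ C2 eqn reflection_in_punct_ball[OF e] e Q
      \<open>0 < \<epsilon>\<close> \<open>0 < \<delta>\<close> this inner outer] show ?thesis
    using \<open>\<delta> \<le> norm x\<close> \<open>norm x < \<rho>\<close> x(2) by (simp add: punct_ball_def)
qed

lemma reflection_invariant:
  fixes \<phi> :: "'a::euclidean_space \<Rightarrow> real"
  assumes C2: "C2_on (punct_ball R) \<phi>" and X: "X_space \<sigma> R \<phi>" and "0 < \<sigma>"
    and eqn: "\<And>x. x \<in> punct_ball R \<Longrightarrow> laplacian \<phi> x = \<gamma> * (x \<bullet> grad \<phi> x) / (norm x)\<^sup>2"
    and Q: "a * (a + real DIM('a)) - \<gamma> * (a + 1) < 0" and "a + \<sigma> + 1 < 0"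
    and e: "norm e = 1" and x: "x \<in> punct_ball R"
  shows "\<phi> (reflection e x) = \<phi> x"
proof -
  have le: "\<phi> y \<le> \<phi> (reflection e' y)" if e': "norm e' = 1" and y: "y \<in> punct_ball R" "0 \<le> y \<bullet> e'" for e' y
  proof (rule field_le_epsilon)
    fix \<epsilon> :: real assume "0 < \<epsilon>"
    have "0 < barrier a e' y + 1"
      using y(2) by (simp add: barrier_def add_nonneg_pos)
    with \<open>0 < \<epsilon>\<close> have "0 < \<epsilon> / (barrier a e' y + 1)"
      by simp
    from reflection_difference_le_barrier[OF C2 X \<open>0 < \<sigma>\<close> eqn Q \<open>a + \<sigma> + 1 < 0\<close> e' y this]
    show "\<phi> y \<le> \<phi> (reflection e' y) + \<epsilon>"
      using \<open>0 < barrier a e' y + 1\<close>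
      by simp
  qed
  have eq: "\<phi> (reflection e' y) = \<phi> y" if e': "norm e' = 1" and y: "y \<in> punct_ball R" "0 \<le> y \<bullet> e'" for e' y
  proof (rule antisym)
    show "\<phi> y \<le> \<phi> (reflection e' y)"
      using le[OF e' y] .
    have "\<phi> (reflection e' y) \<le> \<phi> (reflection (- e') (reflection e' y))"
      using e' y by (intro le) (auto simp: reflection_in_punct_ball inner_reflection_normal)
    then show "\<phi> (reflection e' y) \<le> \<phi> y"
      by (simp add: reflection_uminus reflection_involution[OF e'])
  qed
  show ?thesis
  proof (cases "0 \<le> x \<bullet> e")
    case True
    then show ?thesis
      using eq[OF e x] by simp
  next
    case False
    then show ?thesis
      using eq[of "- e" x] e x by (simp add: reflection_uminus)
  qed
qed

lemma reflection_invariant_imp_radial: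
  fixes \<phi> :: "'a::real_inner \<Rightarrow> 'b"
  assumes inv: "\<And>e x. norm e = 1 \<Longrightarrow> x \<in> S \<Longrightarrow> \<phi> (reflection e x) = \<phi> x"
    and "x \<in> S" "norm y = norm x"
  shows "\<phi> y = \<phi> x"
proof (cases "x = y")
  case False
  then obtain e where "norm e = 1" "reflection e x = y"
    using reflection_swaps_equal_norms[OF False \<open>norm y = norm x\<close>[symmetric]] by blast
  then show ?thesis
    using inv[OF _ \<open>x \<in> S\<close>] by blast
qed simp

lemma radial_zero_sph_avg_imp_zero:
  fixes \<phi> :: "'a::euclidean_space \<Rightarrow> real"
  assumes "zero_sph_avg R \<phi>" and radial: "\<And>y. norm y = norm x \<Longrightarrow> \<phi> y = \<phi> x"
    and "x \<in> punct_ball R"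
  shows "\<phi> x = 0"
proof -
  have "integral (ball 0 1) (\<lambda>y. \<phi> (norm x *\<^sub>R (y /\<^sub>R norm y))) = 0"
    using assms by (simp add: zero_sph_avg_def punct_ball_def)
  moreover have "integral (ball 0 1) (\<lambda>y. \<phi> (norm x *\<^sub>R (y /\<^sub>R norm y))) = integral (ball (0::'a) 1) (\<lambda>y. \<phi> x)"
  proof (rule integral_spike[of "{0}"])
    fix y :: 'a assume "y \<in> ball 0 1 - {0}"
    then show "\<phi> x = \<phi> (norm x *\<^sub>R (y /\<^sub>R norm y))"
      by (intro radial[symmetric]) simp
  qed simp
  moreover have "integral (ball (0::'a) 1) (\<lambda>y. \<phi> x) = \<phi> x * measure lborel (ball (0::'a) 1)"
  proof -
    have "integral (ball (0::'a) 1) (\<lambda>y. \<phi> x * 1) = \<phi> x * integral (ball (0::'a) 1) (\<lambda>y. 1)"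
      by (rule integral_mult_right)
    also have "integral (ball (0::'a) 1) (\<lambda>y. 1) = measure lebesgue (ball (0::'a) 1)"
      by (rule lmeasure_integral[symmetric]) simp
    finally show ?thesis
      by (simp add: measure_completion)
  qed
  moreover have "0 < measure lborel (ball (0::'a) 1)"
    by (rule content_ball_pos) simp
  ultimately show ?thesis
    by simp
qed

section \<open>The exponent of the barrier\<close>

lemma barrier_quadratic_negative:
  fixes s u N \<kappa> :: real
  assumes "0 < s" "s < 1" "0 < u" "u = s * (N - 1) - 1" "\<kappa> = 1 + s \<or> \<kappa> = - (1 + s)"
  shows "(- 1 / s) * (- 1 / s + N) - \<kappa> / (s / u) * (- 1 / s + 1) < 0"
proof -
  have "s\<^sup>2 * ((- 1 / s) * (- 1 / s + N) - \<kappa> / (s / u) * (- 1 / s + 1)) = 1 - N * s + \<kappa> * u * (1 - s)"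
    using \<open>0 < s\<close> \<open>0 < u\<close> by (simp add: field_simps power2_eq_square)
  also have "\<dots> = - s - s\<^sup>2 * u + (\<kappa> - (1 + s)) * (u * (1 - s))"
    using \<open>u = s * (N - 1) - 1\<close> by (simp add: algebra_simps power2_eq_square)
  also have "\<dots> < 0"
  proof -
    have "(\<kappa> - (1 + s)) * (u * (1 - s)) \<le> 0"
      using assms by (intro mult_nonpos_nonneg mult_nonneg_nonneg) auto
    moreover have "0 \<le> s\<^sup>2 * u"
      using \<open>0 < u\<close> by simp
    ultimately show ?thesis
      using \<open>0 < s\<close> by linarith
  qed
  finally show ?thesis
    using \<open>0 < s\<close> by (simp add: mult_less_0_iff)
qed

lemma barrier_exponent_exists:
  fixes N p \<kappa> :: real
  assumes "1 < N" "N / (N - 1) < p" "p < 2" "\<kappa> = p \<or> \<kappa> = - p"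
  obtains a where "a + (2 - p) / (p - 1) + 1 < 0"
    "a * (a + N) - \<kappa> / ((p - 1) / ((p - 1) * (N - 1) - 1)) * (a + 1) < 0"
proof -
  define s where "s = p - 1"
  define u where "u = s * (N - 1) - 1"
  define Q where "Q a = a * (a + N) - \<kappa> / (s / u) * (a + 1)" for a
  have "N < p * (N - 1)"
    using assms(1,2) by (simp add: divide_less_eq)
  then have "0 < u"
    by (simp add: u_def s_def algebra_simps)
  then have "0 < s * (N - 1)"
    by (simp add: u_def)
  then have "0 < s"
    using \<open>1 < N\<close> by (simp add: zero_less_mult_iff)
  \<comment> \<open>\<open>- 1 / s = - (\<sigma> + 1)\<close> is the critical exponent; \<open>Q\<close> is negative there,
    hence also slightly below it.\<close>
  have "Q (- 1 / s) < 0"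
    using barrier_quadratic_negative[OF \<open>0 < s\<close> _ \<open>0 < u\<close> u_def] assms(3,4) by (auto simp: Q_def s_def)
  moreover have "(Q \<longlongrightarrow> Q (- 1 / s)) (at_left (- 1 / s))"
    unfolding Q_def by (intro tendsto_intros)
  ultimately have "eventually (\<lambda>a. Q a < 0) (at_left (- 1 / s))"
    by (simp add: order_tendstoD)
  then obtain b where "b < - 1 / s" and b: "\<And>a. b < a \<Longrightarrow> a < - 1 / s \<Longrightarrow> Q a < 0"
    by (auto simp: eventually_at_left_field)
  define a where "a = (b - 1 / s) / 2"
  show thesis
  proof (rule that)
    have "(2 - p) / (p - 1) + 1 = 1 / s"
      using \<open>0 < s\<close> by (simp add: s_def field_simps)
    moreover have "a + 1 / s < 0"
      using \<open>b < - 1 / s\<close> \<open>0 < s\<close> by (simp add: a_def field_simps)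
    ultimately show "a + (2 - p) / (p - 1) + 1 < 0"
      by (simp only: add.assoc)
    show "a * (a + N) - \<kappa> / ((p - 1) / ((p - 1) * (N - 1) - 1)) * (a + 1) < 0"
      using b[of a] \<open>b < - 1 / s\<close> by (simp add: a_def Q_def u_def s_def)
  qed
qed

theorem lemma2p3:
  fixes \<phi> :: "'a::euclidean_space \<Rightarrow> real"
    and p \<kappa> \<xi> \<beta> \<sigma> :: real and R :: ereal
  assumes N3: "DIM('a) \<ge> 3"
    and p_lo: "real DIM('a) / (real DIM('a) - 1) < p" and p_hi: "p < 2"
    and xi_def: "\<xi> = (p - 1) * (real DIM('a) - 1)"
    and beta_def: "\<beta> = (p - 1) / (\<xi> - 1)"
    and sigma_def: "\<sigma> = (2 - p) / (p - 1)"
    and R_pos: "0 < R"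
    and kappa: "\<kappa> = p \<or> \<kappa> = - p"
    and C2: "C2_on (punct_ball R) \<phi>"
    and X1: "X1_space \<sigma> R \<phi>"
    and eq: "\<forall>x\<in>punct_ball R.
               - laplacian \<phi> x + \<kappa> * (x \<bullet> grad \<phi> x) / (\<beta> * (norm x)\<^sup>2) = 0"
  shows "\<forall>x\<in>punct_ball R. \<phi> x = 0"
proof
  fix x :: 'a assume x: "x \<in> punct_ball R"
  have "1 < real DIM('a)"
    using N3 by simp
  obtain a where a: "a + \<sigma> + 1 < 0" "a * (a + real DIM('a)) - \<kappa> / \<beta> * (a + 1) < 0"
    using barrier_exponent_exists[OF \<open>1 < real DIM('a)\<close> p_lo p_hi kappa]
    unfolding sigma_def beta_def xi_def by blast
  have "1 < real DIM('a) / (real DIM('a) - 1)"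
    using \<open>1 < real DIM('a)\<close> by simp
  then have "1 < p"
    using p_lo by linarith
  then have "0 < \<sigma>"
    using p_hi by (simp add: sigma_def)
  have X: "X_space \<sigma> R \<phi>" and avg: "zero_sph_avg R \<phi>"
    using X1 by (simp_all add: X1_space_def)
  have eqn: "laplacian \<phi> y = \<kappa> / \<beta> * (y \<bullet> grad \<phi> y) / (norm y)\<^sup>2" if "y \<in> punct_ball R" for y
  proof -
    have "laplacian \<phi> y = \<kappa> * (y \<bullet> grad \<phi> y) / (\<beta> * (norm y)\<^sup>2)"
      using eq that by fastforce
    then show ?thesis
      by simp
  qed
  have inv: "\<phi> (reflection e y) = \<phi> y" if "norm e = 1" "y \<in> punct_ball R" for e y
    using reflection_invariant[OF C2 X \<open>0 < \<sigma>\<close> eqn a(2) a(1) that] .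
  have "\<phi> y = \<phi> x" if "norm y = norm x" for y :: 'a
    using reflection_invariant_imp_radial[OF inv x that] .
  then show "\<phi> x = 0"
    using radial_zero_sph_avg_imp_zero[OF avg _ x] by blast
qed

end
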